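(* Let $N,k\ge 10$. Let $Z$ be a finite collection of $Nk$-grid unions such that the sets $D+[-10k,10k]^d$, $D\in Z$, are pairwise disjoint and all contained in a larger $Nk$-grid union $C$. Then $C\setminus\bigcup_{D\in Z}D$ can be tiled by almost $k$-boxes.
   Context: A set $B\subseteq\mathbb{Z}^d$ is an $M$-grid union if there exist $C\subseteq M\mathbb{Z}^d$ and $\gamma\in\mathbb{Z}^d$ with $B=\gamma+C+[1,M]^d$ and both $B$ and $\mathbb{Z}^d\setminus B$ connected (in the graph with edges $\{\alpha,\alpha\pm\epsilon^i\}$). A box is a product of integer intervals; an almost $k$-box is a box all of whose side lengths lie between $k$ and $2k$ and at most one of whose side lengths differs from $k$. Tiling means partitioning into translates of such boxes. *)

theory Defs
  imports Main
begin

text \<open>Points of Z^d are functions 'd \<Rightarrow> int for a finite index type 'd (d = CARD('d)).\<close>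

definition grid_adj :: "('d \<Rightarrow> int) \<Rightarrow> ('d \<Rightarrow> int) \<Rightarrow> bool" where
  "grid_adj a b \<longleftrightarrow> (\<exists>i. \<bar>a i - b i\<bar> = 1 \<and> (\<forall>j. j \<noteq> i \<longrightarrow> a j = b j))"

definition grid_connected :: "('d \<Rightarrow> int) set \<Rightarrow> bool" where
  "grid_connected S \<longleftrightarrow>
     (\<forall>x\<in>S. \<forall>y\<in>S. (\<lambda>a b. a \<in> S \<and> b \<in> S \<and> grid_adj a b)\<^sup>*\<^sup>* x y)"

definition grid_union :: "int \<Rightarrow> ('d::finite \<Rightarrow> int) set \<Rightarrow> bool" where
  "grid_union M B \<longleftrightarrow>
     (\<exists>C \<gamma>. (\<forall>c\<in>C. \<forall>i. M dvd c i) \<and>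
            B = {x. \<exists>c\<in>C. \<forall>i. 1 \<le> x i - \<gamma> i - c i \<and> x i - \<gamma> i - c i \<le> M}) \<and>
     grid_connected B \<and> grid_connected (UNIV - B)"

definition box :: "('d \<Rightarrow> int) \<Rightarrow> ('d \<Rightarrow> int) \<Rightarrow> ('d \<Rightarrow> int) set" where
  "box a b = {x. \<forall>i. a i \<le> x i \<and> x i \<le> b i}"

definition almost_box :: "int \<Rightarrow> ('d \<Rightarrow> int) set \<Rightarrow> bool" where
  "almost_box k P \<longleftrightarrow>
     (\<exists>a b. P = box a b \<and> (\<forall>i. k \<le> b i - a i + 1 \<and> b i - a i + 1 \<le> 2 * k) \<and>
        (\<forall>i j. b i - a i + 1 \<noteq> k \<and> b j - a j + 1 \<noteq> k \<longrightarrow> i = j))"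

text \<open>Tiling by translates of almost k-boxes (a translate of an almost k-box is again one).\<close>
definition tiled_by_almost_boxes :: "int \<Rightarrow> ('d \<Rightarrow> int) set \<Rightarrow> bool" where
  "tiled_by_almost_boxes k S \<longleftrightarrow>
     (\<exists>T. (\<forall>P\<in>T. almost_box k P) \<and>
          (\<forall>P\<in>T. \<forall>Q\<in>T. P \<noteq> Q \<longrightarrow> P \<inter> Q = {}) \<and> \<Union>T = S)"

definition thicken :: "int \<Rightarrow> ('d \<Rightarrow> int) set \<Rightarrow> ('d \<Rightarrow> int) set" where
  "thicken r D = {x. \<exists>y\<in>D. \<forall>i. \<bar>x i - y i\<bar> \<le> r}"

end

theory Submission
  imports Defs
begin

(* A grid union of scale N k is a union of cells of a lattice g + k Z^d, and such a union is
   tiled by k-cubes.  Around each D in Z grow a collar: for the coordinates a1, a2, ... in turn,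
   thicken by 2k in direction ai and round outwards to cells of the lattice whose origin agrees
   with that of C in a1, ..., ai and with that of D in the remaining coordinates.  Each step adds
   a strip Q - P; cutting every line in direction ai at the boundary points of P and at those
   lattice points of Q that are at distance at least k from them splits the strip into boxes
   whose side in direction ai lies between k and 2k.  The final collar of D is a union of cells
   of the lattice of C within distance 3k of D, so the collars are disjoint and lie in C, and
   C minus all collars is tiled by cubes. *)

lemma int_div_eq_iff:
  fixes u k q :: int
  assumes "k > 0"
  shows "u div k = q \<longleftrightarrow> k * q \<le> u \<and> u < k * q + k"
proof
  assume "u div k = q"
  then have "u = k * q + u mod k" by (metis mult_div_mod_eq)
  then show "k * q \<le> u \<and> u < k * q + k"
    using assms pos_mod_sign[of k u] pos_mod_bound[of k u] by linarith
next
  assume "k * q \<le> u \<and> u < k * q + k"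
  then have "(u - k * q) div k = 0" using assms by (simp add: zdiv_eq_0_iff)
  moreover have "(u + k * (- q)) div k = - q + u div k"
    by (rule div_mult_self2) (use assms in simp)
  ultimately show "u div k = q" by simp
qed

lemma dvd_diff_gap:
  fixes c c' h k :: int
  assumes "k dvd c - h" "k dvd c' - h" "c < c'"
  shows "c + k \<le> c'"
proof -
  have "k dvd c' - c" using dvd_diff[OF assms(2,1)] by simp
  then have "k \<le> c' - c" using assms(3) by (simp add: zdvd_imp_le)
  then show ?thesis by simp
qed

lemma int_eq_on_interval:
  fixes f :: "int \<Rightarrow> 'a"
  assumes "\<And>c. min u v < c \<Longrightarrow> c \<le> max u v \<Longrightarrow> f (c - 1) = f c"
  shows "f u = f v"
proof -
  have up: "f m = f n" if "m \<le> n" "\<And>c. m < c \<Longrightarrow> c \<le> n \<Longrightarrow> f (c - 1) = f c" for m n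
    using that
  proof (induction n rule: int_ge_induct)
    case base
    show ?case by (rule refl)
  next
    case (step i)
    have "f m = f i"
      by (rule step.IH, rule step.prems) auto
    also have "f i = f (i + 1 - 1)" by simp
    also have "\<dots> = f (i + 1)" by (rule step.prems) (use step.hyps in auto)
    finally show ?case .
  qed
  show ?thesis
  proof (cases "u \<le> v")
    case True
    show ?thesis by (rule up, fact True, rule assms) (use True in auto)
  next
    case False
    show ?thesis by (rule up[symmetric], use False in simp, rule assms) (use False in auto)
  qed
qed

lemma int_greatest_below:
  fixes S :: "int set"
  assumes "s \<in> S" "s \<le> v"
  obtains m where "m \<in> S" "m \<le> v" "\<And>c. c \<in> S \<Longrightarrow> c \<le> v \<Longrightarrow> c \<le> m"
proof -
  let ?W = "{c \<in> S. s \<le> c \<and> c \<le> v}"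
  have "finite ?W" by (rule finite_subset[of _ "{s..v}"]) auto
  moreover have "s \<in> ?W" using assms by simp
  ultimately have "Max ?W \<in> ?W" "\<And>c. c \<in> ?W \<Longrightarrow> c \<le> Max ?W"
    using Max_in Max_ge by blast+
  moreover have "c \<le> Max ?W" if "c \<in> S" "c \<le> v" for c
    using calculation that by (cases "s \<le> c") auto
  ultimately show ?thesis using that by blast
qed

lemma int_least_above:
  fixes S :: "int set"
  assumes "s \<in> S" "v < s"
  obtains m where "m \<in> S" "v < m" "\<And>c. c \<in> S \<Longrightarrow> v < c \<Longrightarrow> m \<le> c"
proof -
  let ?W = "{c \<in> S. v < c \<and> c \<le> s}"
  have "finite ?W" by (rule finite_subset[of _ "{v<..s}"]) auto
  moreover have "s \<in> ?W" using assms by simp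
  ultimately have "Min ?W \<in> ?W" "\<And>c. c \<in> ?W \<Longrightarrow> Min ?W \<le> c"
    using Min_in Min_le by blast+
  moreover have "Min ?W \<le> c" if "c \<in> S" "v < c" for c
    using calculation that by (cases "c \<le> s") auto
  ultimately show ?thesis using that by blast
qed

section \<open>Cells of a shifted lattice\<close>

definition cell_start :: "int \<Rightarrow> int \<Rightarrow> int \<Rightarrow> int" where
  "cell_start k h v = h + k * ((v - h) div k)"

lemma div_eq_iff_cell_start:
  assumes "k > 0"
  shows "(v - h) div k = (w - h) div k \<longleftrightarrow> cell_start k h v \<le> w \<and> w < cell_start k h v + k"
proof -
  have "(w - h) div k = (v - h) div k \<longleftrightarrow>
      k * ((v - h) div k) \<le> w - h \<and> w - h < k * ((v - h) div k) + k"
    by (rule int_div_eq_iff[OF assms])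
  then show ?thesis unfolding cell_start_def by (smt (verit))
qed

lemma cell_start_bounds: "k > 0 \<Longrightarrow> cell_start k h v \<le> v \<and> v < cell_start k h v + k"
  using div_eq_iff_cell_start by blast

lemma dvd_cell_start: "k dvd cell_start k h v - h"
  unfolding cell_start_def by simp

(* The cells of the lattice g + k Z^d are the cubes g + k q + [0, k - 1]^d. *)
definition same_cell :: "int \<Rightarrow> ('d \<Rightarrow> int) \<Rightarrow> ('d \<Rightarrow> int) \<Rightarrow> ('d \<Rightarrow> int) \<Rightarrow> bool" where
  "same_cell k g x y \<longleftrightarrow> (\<forall>i. (x i - g i) div k = (y i - g i) div k)"

definition cell_union :: "int \<Rightarrow> ('d \<Rightarrow> int) \<Rightarrow> ('d \<Rightarrow> int) set \<Rightarrow> bool" where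
  "cell_union k g S \<longleftrightarrow> (\<forall>x\<in>S. \<forall>y. same_cell k g x y \<longrightarrow> y \<in> S)"

lemma equivp_same_cell: "equivp (same_cell k g)"
  unfolding equivp_def same_cell_def fun_eq_iff by metis

lemma same_cell_dist:
  assumes "k > 0" "same_cell k g x y"
  shows "\<bar>x i - y i\<bar> < k"
  using assms div_eq_iff_cell_start[OF assms(1), of "x i" "g i" "y i"] cell_start_bounds[OF assms(1), of "g i" "x i"]
  unfolding same_cell_def by fastforce

lemma same_cell_class_eq_box:
  assumes "k > 0"
  shows "{y. same_cell k g x y} =
    box (\<lambda>i. cell_start k (g i) (x i)) (\<lambda>i. cell_start k (g i) (x i) + k - 1)"
  using div_eq_iff_cell_start[OF assms] unfolding same_cell_def box_def by auto

lemma cell_union_Diff: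
  assumes "cell_union k g A" "cell_union k g B"
  shows "cell_union k g (A - B)"
  using assms equivp_symp[OF equivp_same_cell] unfolding cell_union_def by blast

lemma cell_union_Union:
  assumes "\<And>S. S \<in> F \<Longrightarrow> cell_union k g S"
  shows "cell_union k g (\<Union>F)"
  using assms unfolding cell_union_def by blast

lemma cell_union_fun_upd_iff:
  assumes "cell_union k g S" "\<And>i. i \<noteq> a \<Longrightarrow> (x i - g i) div k = (y i - g i) div k"
  shows "x(a := p) \<in> S \<longleftrightarrow> y(a := p) \<in> S"
proof -
  have "same_cell k g (x(a := p)) (y(a := p))" "same_cell k g (y(a := p)) (x(a := p))"
    using assms(2) unfolding same_cell_def by auto
  then show ?thesis using assms(1) unfolding cell_union_def by blast
qed

lemma cell_union_boundary_dvd: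
  assumes "k > 0" "cell_union k g S" "(x(a := p - 1) \<in> S) \<noteq> (x(a := p) \<in> S)"
  shows "k dvd p - g a"
proof (rule ccontr)
  assume "\<not> k dvd p - g a"
  then have "cell_start k (g a) p \<noteq> p" using dvd_cell_start[of k "g a" p] by metis
  then have "(p - g a) div k = (p - 1 - g a) div k"
    using div_eq_iff_cell_start[OF assms(1), of p "g a" "p - 1"] cell_start_bounds[OF assms(1), of "g a" p]
    by simp
  then have "same_cell k g (x(a := p)) (x(a := p - 1))" "same_cell k g (x(a := p - 1)) (x(a := p))"
    unfolding same_cell_def by auto
  then show False using assms(2,3) unfolding cell_union_def by blast
qed

definition cell_hull :: "int \<Rightarrow> ('d \<Rightarrow> int) \<Rightarrow> ('d \<Rightarrow> int) set \<Rightarrow> ('d \<Rightarrow> int) set" where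
  "cell_hull k g S = {x. \<exists>y\<in>S. same_cell k g y x}"

lemma cell_union_cell_hull: "cell_union k g (cell_hull k g S)"
  unfolding cell_union_def cell_hull_def using equivp_transp[OF equivp_same_cell] by blast

lemma subset_cell_hull: "S \<subseteq> cell_hull k g S"
  unfolding cell_hull_def using equivp_reflp[OF equivp_same_cell] by blast

lemma cell_hull_cell_union: "cell_union k g S \<Longrightarrow> cell_hull k g S = S"
  using subset_cell_hull unfolding cell_union_def cell_hull_def by blast

lemma cell_union_refine:
  assumes "N > 0" "cell_union (N * k) g S"
  shows "cell_union k g S"
proof -
  have "same_cell (N * k) g x y" if "same_cell k g x y" for x y
    using that zdiv_zmult2_eq[of N] assms(1) unfolding same_cell_def by (metis less_le mult.commute)
  then show ?thesis using assms(2) unfolding cell_union_def by blast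
qed

lemma grid_union_cell_union:
  assumes "grid_union (N * k) B" "N > 0" "k > 0"
  obtains g where "cell_union k g B"
proof -
  define M where "M = N * k"
  have M: "M > 0" using assms(2,3) unfolding M_def by simp
  obtain C \<gamma> where C: "\<forall>c\<in>C. \<forall>i. M dvd c i"
    and B: "B = {x. \<exists>c\<in>C. \<forall>i. 1 \<le> x i - \<gamma> i - c i \<and> x i - \<gamma> i - c i \<le> M}"
    using assms(1) unfolding grid_union_def M_def by (elim conjE exE) simp
  have in_block: "1 \<le> v - \<gamma> i - c i \<and> v - \<gamma> i - c i \<le> M \<longleftrightarrow> (v - (\<gamma> i + 1)) div M = c i div M"
    if c: "c \<in> C" for v c i
  proof -
    obtain q where "c i = M * q" using C c by (meson dvdE)
    then show ?thesis using int_div_eq_iff[OF M, of "v - (\<gamma> i + 1)" q] M by auto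
  qed
  have "y \<in> B" if "x \<in> B" "same_cell M (\<lambda>i. \<gamma> i + 1) x y" for x y
  proof -
    obtain c where c: "c \<in> C" "\<forall>i. 1 \<le> x i - \<gamma> i - c i \<and> x i - \<gamma> i - c i \<le> M"
      using \<open>x \<in> B\<close> B by blast
    have "1 \<le> y i - \<gamma> i - c i \<and> y i - \<gamma> i - c i \<le> M" for i
    proof -
      have "(y i - (\<gamma> i + 1)) div M = (x i - (\<gamma> i + 1)) div M"
        using that(2) unfolding same_cell_def by simp
      also have "\<dots> = c i div M" using in_block[OF c(1)] c(2) by blast
      finally show ?thesis using in_block[OF c(1)] by blast
    qed
    then show ?thesis using c(1) B by blast
  qed
  then have "cell_union (N * k) (\<lambda>i. \<gamma> i + 1) B" unfolding cell_union_def M_def by blast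
  then show ?thesis using cell_union_refine[OF assms(2)] that by blast
qed

section \<open>Tilings by almost boxes\<close>

lemma almost_box_boxI:
  assumes "\<And>i. i \<noteq> a \<Longrightarrow> u i - l i + 1 = k" "k \<le> u a - l a + 1" "u a - l a + 1 \<le> 2 * k"
  shows "almost_box k (box l u)"
  unfolding almost_box_def
proof (intro exI conjI allI impI)
  fix i
  show "k \<le> u i - l i + 1" "u i - l i + 1 \<le> 2 * k"
    using assms by (cases "i = a"; force)+
next
  fix i j
  assume "u i - l i + 1 \<noteq> k \<and> u j - l j + 1 \<noteq> k"
  then show "i = j" using assms(1) by metis
qed (rule refl)

definition almost_box_tiling :: "int \<Rightarrow> ('d \<Rightarrow> int) set set \<Rightarrow> ('d \<Rightarrow> int) set \<Rightarrow> bool" where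
  "almost_box_tiling k T S \<longleftrightarrow>
     (\<forall>P\<in>T. almost_box k P) \<and> (\<forall>P\<in>T. \<forall>Q\<in>T. P \<noteq> Q \<longrightarrow> P \<inter> Q = {}) \<and> \<Union>T = S"

lemma tiled_by_almost_boxes_iff: "tiled_by_almost_boxes k S \<longleftrightarrow> (\<exists>T. almost_box_tiling k T S)"
  unfolding tiled_by_almost_boxes_def almost_box_tiling_def by (rule refl)

lemma tiled_by_almost_boxes_empty: "tiled_by_almost_boxes k {}"
  unfolding tiled_by_almost_boxes_def by blast

lemma tiled_by_almost_boxes_UN:
  assumes "\<And>i. i \<in> I \<Longrightarrow> tiled_by_almost_boxes k (A i)"
    and "\<And>i j. i \<in> I \<Longrightarrow> j \<in> I \<Longrightarrow> i \<noteq> j \<Longrightarrow> A i \<inter> A j = {}"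
  shows "tiled_by_almost_boxes k (\<Union>i\<in>I. A i)"
proof -
  have "\<forall>i\<in>I. \<exists>T. almost_box_tiling k T (A i)"
    using assms(1) unfolding tiled_by_almost_boxes_iff by blast
  then obtain T where T: "\<And>i. i \<in> I \<Longrightarrow> almost_box_tiling k (T i) (A i)"
    by (meson bchoice)
  have cover: "\<Union>(T i) = A i" if "i \<in> I" for i
    using T[OF that] unfolding almost_box_tiling_def by simp
  have "P \<inter> Q = {}" if "i \<in> I" "j \<in> I" "P \<in> T i" "Q \<in> T j" "P \<noteq> Q" for i j P Q
  proof (cases "i = j")
    case True
    then show ?thesis using T[OF that(1)] that(3-5) unfolding almost_box_tiling_def by blast
  next
    case False
    have "P \<subseteq> A i" "Q \<subseteq> A j" using cover[OF that(1)] cover[OF that(2)] that(3,4) by blast+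
    then show ?thesis using assms(2)[OF that(1,2) False] by blast
  qed
  moreover have "\<forall>P\<in>(\<Union>i\<in>I. T i). almost_box k P"
    using T unfolding almost_box_tiling_def by blast
  moreover have "\<Union>(\<Union>i\<in>I. T i) = (\<Union>i\<in>I. A i)"
    using cover by blast
  ultimately have "almost_box_tiling k (\<Union>i\<in>I. T i) (\<Union>i\<in>I. A i)"
    unfolding almost_box_tiling_def by blast
  then show ?thesis unfolding tiled_by_almost_boxes_iff by blast
qed

lemma tiled_by_almost_boxes_Un:
  assumes "tiled_by_almost_boxes k A" "tiled_by_almost_boxes k B" "A \<inter> B = {}"
  shows "tiled_by_almost_boxes k (A \<union> B)"
proof -
  have "tiled_by_almost_boxes k (\<Union>S\<in>{A, B}. S)"
    by (rule tiled_by_almost_boxes_UN) (use assms in auto)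
  then show ?thesis by simp
qed

lemma tiled_by_almost_boxes_Diff_Union:
  assumes "tiled_by_almost_boxes k (C - \<Union>(R ` Z))"
    and "\<And>D. D \<in> Z \<Longrightarrow> tiled_by_almost_boxes k (R D - D)"
    and "\<And>D. D \<in> Z \<Longrightarrow> D \<subseteq> R D" "\<And>D. D \<in> Z \<Longrightarrow> R D \<subseteq> C"
    and "\<And>D D'. D \<in> Z \<Longrightarrow> D' \<in> Z \<Longrightarrow> D \<noteq> D' \<Longrightarrow> R D \<inter> R D' = {}"
  shows "tiled_by_almost_boxes k (C - \<Union>Z)"
proof -
  have "C - \<Union>Z = (C - \<Union>(R ` Z)) \<union> (\<Union>D\<in>Z. R D - D)"
  proof
    show "C - \<Union>Z \<subseteq> (C - \<Union>(R ` Z)) \<union> (\<Union>D\<in>Z. R D - D)" by blast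
    show "(C - \<Union>(R ` Z)) \<union> (\<Union>D\<in>Z. R D - D) \<subseteq> C - \<Union>Z"
    proof (intro Un_least UN_least)
      show "C - \<Union>(R ` Z) \<subseteq> C - \<Union>Z" using assms(3) by blast
      show "R D - D \<subseteq> C - \<Union>Z" if "D \<in> Z" for D using assms(3-5) that by blast
    qed
  qed
  moreover have "tiled_by_almost_boxes k (\<Union>D\<in>Z. R D - D)"
  proof (rule tiled_by_almost_boxes_UN)
    fix D D' assume "D \<in> Z" "D' \<in> Z" "D \<noteq> D'"
    then show "(R D - D) \<inter> (R D' - D') = {}" using assms(5) by blast
  qed (rule assms(2))
  moreover have "(C - \<Union>(R ` Z)) \<inter> (\<Union>D\<in>Z. R D - D) = {}" by auto
  ultimately show ?thesis using tiled_by_almost_boxes_Un[OF assms(1)] by simp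
qed

lemma tiled_by_almost_boxes_equiv_classes:
  assumes "equivp R"
    and "\<And>x. x \<in> S \<Longrightarrow> almost_box k {y. R x y}"
    and "\<And>x y. x \<in> S \<Longrightarrow> R x y \<Longrightarrow> y \<in> S"
  shows "tiled_by_almost_boxes k S"
proof -
  have classes: "R x = R y" if "R x z" "R y z" for x y z
    using that assms(1) unfolding equivp_def by metis
  have "almost_box_tiling k ((\<lambda>x. {y. R x y}) ` S) S"
    unfolding almost_box_tiling_def
  proof (intro conjI ballI impI)
    fix P Q
    assume "P \<in> (\<lambda>x. {y. R x y}) ` S" "Q \<in> (\<lambda>x. {y. R x y}) ` S" "P \<noteq> Q"
    then show "P \<inter> Q = {}" by (auto dest: classes)
  next
    have "x \<in> {y. R x y}" for x using equivp_reflp[OF assms(1)] by simp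
    then show "\<Union>((\<lambda>x. {y. R x y}) ` S) = S" using assms(3) by blast
  qed (use assms(2) in blast)
  then show ?thesis unfolding tiled_by_almost_boxes_iff by blast
qed

lemma cell_union_tiled:
  assumes "k > 0" "cell_union k g S"
  shows "tiled_by_almost_boxes k S"
proof (rule tiled_by_almost_boxes_equiv_classes[OF equivp_same_cell])
  fix x
  show "almost_box k {y. same_cell k g x y}"
    unfolding same_cell_class_eq_box[OF assms(1)] by (rule almost_box_boxI) (use assms(1) in auto)
qed (use assms(2) in \<open>auto simp: cell_union_def\<close>)

section \<open>Strips\<close>

locale cell_strip =
  fixes k :: int and g g' :: "'d \<Rightarrow> int" and a :: 'd and P Q :: "('d \<Rightarrow> int) set"
  assumes k_pos: "k > 0"
    and origins_agree: "\<And>i. i \<noteq> a \<Longrightarrow> g i = g' i"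
    and cell_union_P: "cell_union k g P"
    and cell_union_Q: "cell_union k g' Q"
    and thickening: "\<And>x t. x \<in> P \<Longrightarrow> \<bar>t\<bar> \<le> k \<Longrightarrow> x(a := x a + t) \<in> Q"
begin

definition same_column :: "('d \<Rightarrow> int) \<Rightarrow> ('d \<Rightarrow> int) \<Rightarrow> bool" where
  "same_column x y \<longleftrightarrow> (\<forall>i. i \<noteq> a \<longrightarrow> (x i - g i) div k = (y i - g i) div k)"

definition boundary :: "('d \<Rightarrow> int) \<Rightarrow> int set" where
  "boundary x = {p. (x(a := p - 1) \<in> P) \<noteq> (x(a := p) \<in> P)}"

(* The boundary of Q on a line lies in g' a + k Z; the lattice cut points are kept only at
   distance at least k from the boundary of P so that consecutive cuts stay k apart. *)
definition cuts :: "('d \<Rightarrow> int) \<Rightarrow> int set" where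
  "cuts x = boundary x \<union> {p. k dvd p - g' a \<and> (\<forall>q\<in>boundary x. k \<le> \<bar>p - q\<bar>)}"

definition same_tile :: "('d \<Rightarrow> int) \<Rightarrow> ('d \<Rightarrow> int) \<Rightarrow> bool" where
  "same_tile x y \<longleftrightarrow> same_column x y \<and> (\<forall>c\<in>cuts x. c \<le> x a \<longleftrightarrow> c \<le> y a)"

lemma mem_P_iff_same_column: "same_column x y \<Longrightarrow> x(a := p) \<in> P \<longleftrightarrow> y(a := p) \<in> P"
  using cell_union_fun_upd_iff[OF cell_union_P] unfolding same_column_def by blast

lemma mem_Q_iff_same_column:
  assumes "same_column x y"
  shows "x(a := p) \<in> Q \<longleftrightarrow> y(a := p) \<in> Q"
proof (rule cell_union_fun_upd_iff[OF cell_union_Q])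
  fix i
  assume "i \<noteq> a"
  then show "(x i - g' i) div k = (y i - g' i) div k"
    using assms origins_agree[OF \<open>i \<noteq> a\<close>, symmetric] \<open>i \<noteq> a\<close> unfolding same_column_def by simp
qed

lemma cuts_same_column: "same_column x y \<Longrightarrow> cuts x = cuts y"
  unfolding cuts_def boundary_def using mem_P_iff_same_column by simp

lemma equivp_same_tile: "equivp same_tile"
proof (rule equivpI)
  have column_sym: "same_column y x" if "same_column x y" for x y
    using that unfolding same_column_def by metis
  have column_trans: "same_column x z" if "same_column x y" "same_column y z" for x y z
    using that unfolding same_column_def by metis
  show "reflp same_tile" by (rule reflpI) (simp add: same_tile_def same_column_def)
  show "symp same_tile"
    by (rule sympI) (use column_sym cuts_same_column in \<open>auto simp: same_tile_def\<close>)
  show "transp same_tile"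
    by (rule transpI) (use column_trans cuts_same_column in \<open>auto simp: same_tile_def\<close>)
qed

lemma boundary_dvd: "p \<in> boundary x \<Longrightarrow> k dvd p - g a"
  unfolding boundary_def using cell_union_boundary_dvd[OF k_pos cell_union_P] by blast

lemma boundary_subset_cuts: "boundary x \<subseteq> cuts x"
  unfolding cuts_def by blast

lemma Q_boundary_in_cuts:
  assumes "(x(a := p - 1) \<in> Q) \<noteq> (x(a := p) \<in> Q)"
  shows "p \<in> cuts x"
proof -
  have "k \<le> \<bar>p - q\<bar>" if q: "q \<in> boundary x" for q
  proof -
    obtain r where r: "r = q - 1 \<or> r = q" "x(a := r) \<in> P"
      using q unfolding boundary_def by auto
    obtain s where s: "s = p - 1 \<or> s = p" "x(a := s) \<notin> Q"
      using assms by auto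
    have "\<not> \<bar>s - r\<bar> \<le> k"
      using thickening[OF r(2), of "s - r"] s(2) by auto
    then show ?thesis using r(1) s(1) by auto
  qed
  then show ?thesis
    using cell_union_boundary_dvd[OF k_pos cell_union_Q assms] unfolding cuts_def by blast
qed

lemma cuts_gap:
  assumes "c \<in> cuts x" "c' \<in> cuts x" "c < c'"
  shows "c + k \<le> c'"
proof (cases "c \<in> boundary x \<and> c' \<in> boundary x")
  case True
  then show ?thesis using dvd_diff_gap[OF boundary_dvd boundary_dvd assms(3)] by blast
next
  case False
  then show ?thesis using assms dvd_diff_gap[of k c "g' a" c'] unfolding cuts_def by fastforce
qed

lemma cut_in_window: "\<exists>c\<in>cuts x. m \<le> c \<and> c < m + 2 * k"
proof (rule ccontr)
  assume no_cut: "\<not> ?thesis"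
  \<comment> \<open>The window contains two lattice points p and p + k; if neither is a cut, boundary points
    of P within distance k of them lie outside the window, hence are more than 2k and less
    than 3k apart, although they are congruent mod k.\<close>
  define p where "p = cell_start k (g' a) (m + k - 1)"
  have p: "m \<le> p" "p < m + k" using cell_start_bounds[OF k_pos, of "g' a" "m + k - 1"]
    unfolding p_def by simp_all
  have "k dvd p - g' a" using dvd_cell_start unfolding p_def by simp
  moreover have "(p + k) - g' a = (p - g' a) + k" by simp
  ultimately have "k dvd (p + k) - g' a" by (metis dvd_add_triv_right_iff)
  then have "p \<notin> cuts x" "p + k \<notin> cuts x" using no_cut p by auto
  then obtain q1 q2 where q: "q1 \<in> boundary x" "\<bar>p - q1\<bar> < k" "q2 \<in> boundary x" "\<bar>p + k - q2\<bar> < k"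
    using \<open>k dvd p - g' a\<close> \<open>k dvd (p + k) - g' a\<close> unfolding cuts_def by force
  then have "q1 < m" "m + 2 * k \<le> q2" using no_cut p boundary_subset_cuts by force+
  have "(q1 + 2 * k) - g a = (q1 - g a) + k * 2" by simp
  then have "k dvd (q1 + 2 * k) - g a" using boundary_dvd[OF q(1)] by (metis dvd_add dvd_triv_left)
  then have "q1 + 3 * k \<le> q2"
    using dvd_diff_gap[OF _ boundary_dvd[OF q(3)]] \<open>q1 < m\<close> \<open>m + 2 * k \<le> q2\<close> k_pos by force
  then show False using q p by simp
qed

lemma tile_eq_box:
  assumes lo: "lo \<in> cuts x" "lo \<le> x a" "\<And>c. c \<in> cuts x \<Longrightarrow> c \<le> x a \<Longrightarrow> c \<le> lo"
    and hi: "hi \<in> cuts x" "x a < hi" "\<And>c. c \<in> cuts x \<Longrightarrow> x a < c \<Longrightarrow> hi \<le> c"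
  shows "{y. same_tile x y} =
    box ((\<lambda>i. cell_start k (g i) (x i))(a := lo)) ((\<lambda>i. cell_start k (g i) (x i) + k - 1)(a := hi - 1))"
proof -
  have column: "same_column x y \<longleftrightarrow>
      (\<forall>i. i \<noteq> a \<longrightarrow> cell_start k (g i) (x i) \<le> y i \<and> y i \<le> cell_start k (g i) (x i) + k - 1)" for y
    unfolding same_column_def using div_eq_iff_cell_start[OF k_pos] by auto
  have no_cut: "(\<forall>c\<in>cuts x. c \<le> x a \<longleftrightarrow> c \<le> y a) \<longleftrightarrow> lo \<le> y a \<and> y a \<le> hi - 1" for y
  proof
    assume "\<forall>c\<in>cuts x. c \<le> x a \<longleftrightarrow> c \<le> y a"
    then show "lo \<le> y a \<and> y a \<le> hi - 1" using lo(1,2) hi(1,2) by force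
  next
    assume "lo \<le> y a \<and> y a \<le> hi - 1"
    then show "\<forall>c\<in>cuts x. c \<le> x a \<longleftrightarrow> c \<le> y a"
      using lo(3) hi(3) by (meson dual_order.trans le_less_trans linorder_not_le zle_diff1_eq)
  qed
  show ?thesis
    unfolding same_tile_def column no_cut box_def by (auto split: if_splits)
qed

lemma almost_box_tile: "almost_box k {y. same_tile x y}"
proof -
  obtain c1 where "c1 \<in> cuts x" "x a - 2 * k + 1 \<le> c1" "c1 \<le> x a"
    using cut_in_window[of x "x a - 2 * k + 1"] by auto
  then obtain lo where lo: "lo \<in> cuts x" "lo \<le> x a" "\<And>c. c \<in> cuts x \<Longrightarrow> c \<le> x a \<Longrightarrow> c \<le> lo"
    using int_greatest_below by metis
  obtain c2 where "c2 \<in> cuts x" "x a < c2"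
    using cut_in_window[of x "x a + 1"] by auto
  then obtain hi where hi: "hi \<in> cuts x" "x a < hi" "\<And>c. c \<in> cuts x \<Longrightarrow> x a < c \<Longrightarrow> hi \<le> c"
    using int_least_above by metis
  have "lo + k \<le> hi" using cuts_gap[OF lo(1) hi(1)] lo(2) hi(2) by simp
  moreover have "hi \<le> lo + 2 * k"
  proof -
    obtain c where c: "c \<in> cuts x" "lo + 1 \<le> c" "c < lo + 1 + 2 * k"
      using cut_in_window by blast
    then have "x a < c" using lo(3) by force
    then show ?thesis using hi(3)[OF c(1)] c(3) by simp
  qed
  moreover have "{y. same_tile x y} =
      box ((\<lambda>i. cell_start k (g i) (x i))(a := lo)) ((\<lambda>i. cell_start k (g i) (x i) + k - 1)(a := hi - 1))"
    by (rule tile_eq_box[OF lo hi])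
  ultimately show ?thesis by (auto intro: almost_box_boxI[where a = a])
qed

lemma same_tile_stays_in_Q_minus_P:
  assumes x: "x \<in> Q - P" and "same_tile x y"
  shows "y \<in> Q - P"
proof -
  have column: "same_column x y" and sides: "\<forall>c\<in>cuts x. c \<le> x a \<longleftrightarrow> c \<le> y a"
    using assms(2) unfolding same_tile_def by auto
  have between: "c \<notin> cuts x" if "min (x a) (y a) < c" "c \<le> max (x a) (y a)" for c
    using sides that by force
  have "x(a := x a) \<in> P \<longleftrightarrow> x(a := y a) \<in> P"
    by (rule int_eq_on_interval[where f = "\<lambda>p. x(a := p) \<in> P"])
      (use between boundary_subset_cuts in \<open>auto simp: boundary_def\<close>)
  moreover have "x(a := x a) \<in> Q \<longleftrightarrow> x(a := y a) \<in> Q"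
    by (rule int_eq_on_interval[where f = "\<lambda>p. x(a := p) \<in> Q"])
      (use between Q_boundary_in_cuts in blast)
  ultimately have "x(a := y a) \<in> Q - P" using x by simp
  then show ?thesis
    using mem_P_iff_same_column[OF column] mem_Q_iff_same_column[OF column] by simp
qed

theorem tiled_Q_minus_P: "tiled_by_almost_boxes k (Q - P)"
  using tiled_by_almost_boxes_equiv_classes[OF equivp_same_tile almost_box_tile]
    same_tile_stays_in_Q_minus_P by blast

end

section \<open>Collars\<close>

lemma thicken_mono:
  assumes "r \<le> s" "A \<subseteq> B"
  shows "thicken r A \<subseteq> thicken s B"
proof
  fix x
  assume "x \<in> thicken r A"
  then obtain y where "y \<in> A" "\<forall>i. \<bar>x i - y i\<bar> \<le> r" unfolding thicken_def by blast
  moreover from this(2) have "\<bar>x i - y i\<bar> \<le> s" for i using assms(1) by (meson order_trans)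
  ultimately show "x \<in> thicken s B" using assms(2) unfolding thicken_def by blast
qed

lemma thicken_thicken: "thicken r (thicken s D) \<subseteq> thicken (r + s) D"
proof
  fix x
  assume "x \<in> thicken r (thicken s D)"
  then obtain y z where z: "z \<in> D" and "\<forall>i. \<bar>x i - y i\<bar> \<le> r" "\<forall>i. \<bar>y i - z i\<bar> \<le> s"
    unfolding thicken_def by blast
  then have "\<bar>x i - z i\<bar> \<le> r + s" for i
    by (auto simp: abs_le_iff dest!: spec[of _ i])
  then show "x \<in> thicken (r + s) D" using z unfolding thicken_def by blast
qed

lemma cell_hull_subset_thicken:
  assumes "k > 0"
  shows "cell_hull k g S \<subseteq> thicken k S"
proof
  fix x
  assume "x \<in> cell_hull k g S"
  then obtain y where "y \<in> S" "same_cell k g y x" unfolding cell_hull_def by blast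
  moreover from this(2) have "\<bar>x i - y i\<bar> \<le> k" for i
    using same_cell_dist[OF assms, of g y x i] by (simp add: abs_minus_commute)
  ultimately show "x \<in> thicken k S" unfolding thicken_def by blast
qed

definition stretch :: "int \<Rightarrow> ('d \<Rightarrow> int) set \<Rightarrow> 'd set \<Rightarrow> ('d \<Rightarrow> int) set" where
  "stretch r D J = {y. \<exists>z\<in>D. \<forall>i. (i \<notin> J \<longrightarrow> y i = z i) \<and> \<bar>y i - z i\<bar> \<le> r}"

lemma stretch_empty: "r \<ge> 0 \<Longrightarrow> stretch r D {} = D"
  unfolding stretch_def by (auto simp: all_conj_distrib fun_eq_iff[symmetric])

lemma subset_stretch: "r \<ge> 0 \<Longrightarrow> D \<subseteq> stretch r D J"
  unfolding stretch_def by force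

lemma stretch_subset_thicken: "stretch r D J \<subseteq> thicken r D"
  unfolding stretch_def thicken_def by blast

definition mixed_origin :: "('d \<Rightarrow> int) \<Rightarrow> ('d \<Rightarrow> int) \<Rightarrow> 'd set \<Rightarrow> 'd \<Rightarrow> int" where
  "mixed_origin gC gD J = (\<lambda>i. if i \<in> J then gC i else gD i)"

lemma mixed_origin_empty [simp]: "mixed_origin gC gD {} = gD"
  and mixed_origin_UNIV [simp]: "mixed_origin gC gD UNIV = gC"
  unfolding mixed_origin_def by simp_all

definition collar :: "int \<Rightarrow> ('d \<Rightarrow> int) \<Rightarrow> ('d \<Rightarrow> int) \<Rightarrow> ('d \<Rightarrow> int) set \<Rightarrow> 'd set \<Rightarrow> ('d \<Rightarrow> int) set" where
  "collar k gC gD D J = cell_hull k (mixed_origin gC gD J) (stretch (2 * k) D J)"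

lemma cell_union_collar: "cell_union k (mixed_origin gC gD J) (collar k gC gD D J)"
  unfolding collar_def by (rule cell_union_cell_hull)

lemma collar_empty: "k \<ge> 0 \<Longrightarrow> cell_union k gD D \<Longrightarrow> collar k gC gD D {} = D"
  unfolding collar_def by (simp add: stretch_empty cell_hull_cell_union)

lemma subset_collar: "k \<ge> 0 \<Longrightarrow> D \<subseteq> collar k gC gD D J"
  unfolding collar_def using subset_stretch[of "2 * k" D J] subset_cell_hull by fastforce

lemma collar_subset_thicken:
  assumes "k > 0"
  shows "collar k gC gD D J \<subseteq> thicken (3 * k) D"
proof -
  have "collar k gC gD D J \<subseteq> thicken k (stretch (2 * k) D J)"
    unfolding collar_def by (rule cell_hull_subset_thicken[OF assms])
  also have "\<dots> \<subseteq> thicken k (thicken (2 * k) D)"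
    by (rule thicken_mono[OF order_refl stretch_subset_thicken])
  also have "\<dots> \<subseteq> thicken (3 * k) D"
    using thicken_thicken[of k "2 * k" D] by simp
  finally show ?thesis .
qed

lemma collar_shift:
  assumes "k > 0" "a \<notin> J" "x \<in> collar k gC gD D J" "\<bar>t\<bar> \<le> k"
  shows "x(a := x a + t) \<in> collar k gC gD D (insert a J)"
proof -
  obtain y z where cell: "same_cell k (mixed_origin gC gD J) y x" and "z \<in> D"
    and yz: "\<forall>i. (i \<notin> J \<longrightarrow> y i = z i) \<and> \<bar>y i - z i\<bar> \<le> 2 * k"
    using assms(3) unfolding collar_def cell_hull_def stretch_def by blast
  define y' where "y' = y(a := x a + t)"
  have "\<bar>y a - x a\<bar> < k" using same_cell_dist[OF assms(1) cell] .
  moreover have "y a = z a" using yz assms(2) by blast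
  ultimately have "\<bar>y' a - z a\<bar> \<le> 2 * k" unfolding y'_def using assms(4) by simp
  then have "y' \<in> stretch (2 * k) D (insert a J)"
    using yz \<open>z \<in> D\<close> unfolding stretch_def y'_def by auto
  moreover have "same_cell k (mixed_origin gC gD (insert a J)) y' (x(a := x a + t))"
    unfolding same_cell_def
  proof
    fix i
    show "(y' i - mixed_origin gC gD (insert a J) i) div k =
        ((x(a := x a + t)) i - mixed_origin gC gD (insert a J) i) div k"
    proof (cases "i = a")
      case False
      then have "mixed_origin gC gD (insert a J) i = mixed_origin gC gD J i"
        by (simp add: mixed_origin_def)
      then show ?thesis using cell False unfolding same_cell_def y'_def by simp
    qed (simp add: y'_def)
  qed
  ultimately show ?thesis unfolding collar_def cell_hull_def by blast
qed

lemma tiled_collar_Diff: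
  assumes "k > 0" "cell_union k gD D" "finite J"
  shows "tiled_by_almost_boxes k (collar k gC gD D J - D)"
  using assms(3)
proof (induction J rule: finite_induct)
  case empty
  show ?case using collar_empty[of k gD D gC] assms(1,2) tiled_by_almost_boxes_empty by simp
next
  case (insert a J)
  let ?P = "collar k gC gD D J" and ?Q = "collar k gC gD D (insert a J)"
  have "cell_strip k (mixed_origin gC gD J) (mixed_origin gC gD (insert a J)) a ?P ?Q"
  proof (rule cell_strip.intro)
    show "\<And>i. i \<noteq> a \<Longrightarrow> mixed_origin gC gD J i = mixed_origin gC gD (insert a J) i"
      by (simp add: mixed_origin_def)
  qed (use assms(1) insert(2) cell_union_collar collar_shift in auto)
  then have "tiled_by_almost_boxes k (?Q - ?P)" by (rule cell_strip.tiled_Q_minus_P)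
  moreover have "?P \<subseteq> ?Q" using collar_shift[OF assms(1) insert(2), of _ gC gD D 0] assms(1) by fastforce
  moreover have "D \<subseteq> ?P" using subset_collar assms(1) less_imp_le by blast
  ultimately have "tiled_by_almost_boxes k ((?P - D) \<union> (?Q - ?P))"
    using tiled_by_almost_boxes_Un[OF insert(3)] by blast
  moreover have "(?P - D) \<union> (?Q - ?P) = ?Q - D" using \<open>?P \<subseteq> ?Q\<close> \<open>D \<subseteq> ?P\<close> by blast
  ultimately show ?case by simp
qed

theorem proposition6p3:
  fixes N k :: int and Z :: "('d::finite \<Rightarrow> int) set set" and C :: "('d \<Rightarrow> int) set"
  assumes "N \<ge> 10" and "k \<ge> 10"
    and "finite Z"
    and "\<forall>D\<in>Z. grid_union (N * k) D"
    and "\<forall>D\<in>Z. \<forall>D'\<in>Z. D \<noteq> D' \<longrightarrow> thicken (10 * k) D \<inter> thicken (10 * k) D' = {}"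
    and "grid_union (N * k) C"
    and "\<forall>D\<in>Z. thicken (10 * k) D \<subseteq> C"
  shows "tiled_by_almost_boxes k (C - \<Union>Z)"
proof -
  have k: "k > 0" and N: "N > 0" using assms(1,2) by simp_all
  obtain gC where gC: "cell_union k gC C" using grid_union_cell_union[OF assms(6) N k] .
  have "\<forall>D\<in>Z. \<exists>g. cell_union k g D" using grid_union_cell_union[OF _ N k] assms(4) by metis
  then obtain gD where gD: "\<And>D. D \<in> Z \<Longrightarrow> cell_union k (gD D) D" by (meson bchoice)
  define R where "R D = collar k gC (gD D) D UNIV" for D
  have R_thicken: "R D \<subseteq> thicken (10 * k) D" for D
    using collar_subset_thicken[OF k] thicken_mono[of "3 * k" "10 * k"] k unfolding R_def by fastforce
  show ?thesis
  proof (rule tiled_by_almost_boxes_Diff_Union[where R = R])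
    have "cell_union k gC (R D)" for D
      using cell_union_collar[of k gC "gD D" UNIV D] unfolding R_def by simp
    then have "cell_union k gC (C - \<Union>(R ` Z))"
      by (intro cell_union_Diff[OF gC] cell_union_Union) blast
    then show "tiled_by_almost_boxes k (C - \<Union>(R ` Z))" by (rule cell_union_tiled[OF k])
    show "tiled_by_almost_boxes k (R D - D)" if "D \<in> Z" for D
      unfolding R_def by (rule tiled_collar_Diff[OF k gD[OF that]]) simp
    show "D \<subseteq> R D" for D unfolding R_def using subset_collar k less_imp_le by blast
    show "R D \<subseteq> C" if "D \<in> Z" for D using R_thicken assms(7) that by blast
    show "R D \<inter> R D' = {}" if "D \<in> Z" "D' \<in> Z" "D \<noteq> D'" for D D'
      using R_thicken[of D] R_thicken[of D'] assms(5) that by blast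
  qed
qed

end
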